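(* In the public goods model, every MNW allocation satisfies Prop1.
   Context: Public goods model: agents $[n]$, goods $G=[m]$, integer $0\le k\le m$, nonnegative integer additive values $v_{ij}$, $v_i(S)=\sum_{j\in S}v_{ij}$, every agent having some good with $v_{ij}>0$. An allocation is $x\subseteq G$ with $|x|\le k$. $\mathrm{NW}(x)=(\prod_i v_i(x))^{1/n}$; an MNW allocation maximizes NW over allocations, where if all allocations have NW $0$ an MNW allocation maximizes the number of agents with positive utility and then the product of positive utilities. $\mathrm{Prop}_i=\frac1n\max_{|y|\le k}v_i(y)$. $x$ satisfies Prop1 if for every agent $i$ there exist $g\in x$ and $g'\in G$ with $v_i((x\setminus\{g\})\cup\{g'\})\ge\mathrm{Prop}_i$. *)

theory Defs
  imports Complex_Main
begin

text \<open>Public goods model. Agents are {..<n}, goods are {..<m};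
  v i j is the (nonnegative integer) value of agent i for good j.\<close>

definition util :: "(nat \<Rightarrow> nat \<Rightarrow> nat) \<Rightarrow> nat \<Rightarrow> nat set \<Rightarrow> nat" where
  "util v i S = (\<Sum>j\<in>S. v i j)"

definition allocations :: "nat \<Rightarrow> nat \<Rightarrow> nat set set" where
  "allocations m k = {x. x \<subseteq> {..<m} \<and> card x \<le> k}"

definition NW :: "nat \<Rightarrow> (nat \<Rightarrow> nat \<Rightarrow> nat) \<Rightarrow> nat set \<Rightarrow> real" where
  "NW n v x = root n (\<Prod>i<n. real (util v i x))"

definition pos_agents :: "nat \<Rightarrow> (nat \<Rightarrow> nat \<Rightarrow> nat) \<Rightarrow> nat set \<Rightarrow> nat set" where
  "pos_agents n v x = {i. i < n \<and> util v i x > 0}"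

definition pos_prod :: "nat \<Rightarrow> (nat \<Rightarrow> nat \<Rightarrow> nat) \<Rightarrow> nat set \<Rightarrow> real" where
  "pos_prod n v x = (\<Prod>i\<in>pos_agents n v x. real (util v i x))"

definition is_MNW :: "nat \<Rightarrow> nat \<Rightarrow> nat \<Rightarrow> (nat \<Rightarrow> nat \<Rightarrow> nat) \<Rightarrow> nat set \<Rightarrow> bool" where
  "is_MNW n m k v x \<longleftrightarrow> x \<in> allocations m k \<and>
     (if \<exists>y\<in>allocations m k. NW n v y > 0
      then (\<forall>y\<in>allocations m k. NW n v y \<le> NW n v x)
      else (\<forall>y\<in>allocations m k. card (pos_agents n v y) \<le> card (pos_agents n v x)) \<and>
           (\<forall>y\<in>allocations m k. card (pos_agents n v y) = card (pos_agents n v x)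
               \<longrightarrow> pos_prod n v y \<le> pos_prod n v x))"

definition Prop_share :: "nat \<Rightarrow> nat \<Rightarrow> nat \<Rightarrow> (nat \<Rightarrow> nat \<Rightarrow> nat) \<Rightarrow> nat \<Rightarrow> real" where
  "Prop_share n m k v i = (1 / real n) * real (Max ((util v i) ` allocations m k))"

definition Prop1 :: "nat \<Rightarrow> nat \<Rightarrow> nat \<Rightarrow> (nat \<Rightarrow> nat \<Rightarrow> nat) \<Rightarrow> nat set \<Rightarrow> bool" where
  "Prop1 n m k v x \<longleftrightarrow> (\<forall>i<n. \<exists>g\<in>x. \<exists>g'<m.
      real (util v i ((x - {g}) \<union> {g'})) \<ge> Prop_share n m k v i)"

end

theory Submission
  imports Defs "HOL-Analysis.Infinite_Products"
begin

(* If k <= n, agent i's share is at most k/n <= 1 times the value of its favourite good, which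
   can be swapped into any nonempty allocation. If k > n, giving every agent one good it values
   is feasible, so an MNW allocation x maximizes the Nash product and gives everyone positive
   utility. If x leaves a slot unused, no unused good is valued by anyone, so x dominates every
   allocation. Otherwise suppose no swap brings i to u_i(y)/n =: P. Weigh each good t of x by
   v_i(t) + P * sum_{h <> i} v_h(t)/u_h(x); the weights of x - y total at most
   u_i(x - y) + (n-1)P, which is less than u_i(y - x) because u_i(x) < P. As |y - x| <= |x - y|,
   some g in x - y and g' in y - x satisfy weight(g) < v_i(g'). By the Weierstrass product
   inequality the others keep a fraction 1 - B of their product, B their total relative loss,
   while i gains more than the factor 1/(1 - B); so the swap raises the Nash product. *)

lemma util_mono: "finite B \<Longrightarrow> A \<subseteq> B \<Longrightarrow> util v h A \<le> util v h B"
  unfolding util_def by (rule sum_mono2) auto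

lemma member_le_util: "finite x \<Longrightarrow> g \<in> x \<Longrightarrow> v h g \<le> util v h x"
  unfolding util_def by (rule member_le_sum) auto

lemma util_remove: "finite x \<Longrightarrow> g \<in> x \<Longrightarrow> util v h x = util v h (x - {g}) + v h g"
  unfolding util_def by (simp add: sum.remove)

lemma util_swap:
  "finite x \<Longrightarrow> g' \<notin> x \<Longrightarrow> util v h (x - {g} \<union> {g'}) = util v h (x - {g}) + v h g'"
  unfolding util_def by (subst Un_commute) (simp add: sum.insert)

lemma util_Diff_balance:
  "finite x \<Longrightarrow> finite y \<Longrightarrow> util v h y + util v h (x - y) = util v h x + util v h (y - x)"
  unfolding util_def using sum.Int_Diff[of x "v h" y] sum.Int_Diff[of y "v h" x]
  by (simp add: Int_commute)

lemma util_le_card_mult: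
  assumes "\<forall>j\<in>y. v h j \<le> a"
  shows "util v h y \<le> card y * a"
  unfolding util_def using sum_bounded_above[of y "v h" a] assms by auto

lemma finite_allocations: "finite (allocations m k)"
  unfolding allocations_def by (rule finite_subset[of _ "Pow {..<m}"]) auto

lemma allocation_finite: "x \<in> allocations m k \<Longrightarrow> finite x"
  unfolding allocations_def by (auto intro: finite_subset)

lemma insert_in_allocations:
  assumes "x \<in> allocations m k" "card x < k" "g < m"
  shows "insert g x \<in> allocations m k"
proof -
  have "card (insert g x) \<le> Suc (card x)"
    using allocation_finite[OF assms(1)] by (simp add: card_insert_if)
  then show ?thesis using assms unfolding allocations_def by auto
qed

lemma swap_in_allocations:
  assumes "x \<in> allocations m k" "g \<in> x" "g' < m"
  shows "x - {g} \<union> {g'} \<in> allocations m k"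
proof -
  have "finite x" using assms(1) by (rule allocation_finite)
  then have "card (insert g' (x - {g})) \<le> Suc (card (x - {g}))"
    by (simp add: card_insert_if)
  also have "\<dots> = card x"
    using \<open>finite x\<close> assms(2) by (rule card_Suc_Diff1)
  finally show ?thesis using assms unfolding allocations_def by auto
qed

definition nash_product :: "nat \<Rightarrow> (nat \<Rightarrow> nat \<Rightarrow> nat) \<Rightarrow> nat set \<Rightarrow> real" where
  "nash_product n v x = (\<Prod>h<n. real (util v h x))"

lemma nash_product_remove:
  "i < n \<Longrightarrow> nash_product n v x = real (util v i x) * (\<Prod>h\<in>{..<n} - {i}. real (util v h x))"
  unfolding nash_product_def by (subst prod.remove[of _ i]) auto

lemma NW_eq_root: "NW n v x = root n (nash_product n v x)"
  unfolding NW_def nash_product_def ..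

lemma NW_le_NW_iff:
  "0 < n \<Longrightarrow> NW n v x \<le> NW n v y \<longleftrightarrow> nash_product n v x \<le> nash_product n v y"
  unfolding NW_eq_root by simp

lemma nash_product_pos_iff: "0 < nash_product n v x \<longleftrightarrow> (\<forall>h<n. 0 < util v h x)"
proof
  assume pos: "0 < nash_product n v x"
  show "\<forall>h<n. 0 < util v h x"
  proof (intro allI impI)
    fix h assume "h < n"
    then have "util v h x = 0 \<Longrightarrow> nash_product n v x = 0"
      unfolding nash_product_def by (intro prod_zero) auto
    then show "0 < util v h x" using pos by fastforce
  qed
next
  assume "\<forall>h<n. 0 < util v h x"
  then show "0 < nash_product n v x" unfolding nash_product_def by (intro prod_pos) simp
qed

lemma NW_pos_iff: "0 < n \<Longrightarrow> 0 < NW n v x \<longleftrightarrow> (\<forall>h<n. 0 < util v h x)"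
  using real_root_less_iff[of n 0] by (simp add: NW_eq_root nash_product_pos_iff)

lemma exists_allocation_NW_pos:
  assumes "0 < n" "n \<le> k" "\<forall>i<n. \<exists>j<m. 0 < v i j"
  shows "\<exists>y\<in>allocations m k. 0 < NW n v y"
proof -
  obtain c where c: "\<forall>i<n. c i < m \<and> 0 < v i (c i)" using assms(3) by metis
  have "c ` {..<n} \<in> allocations m k"
    using c card_image_le[of "{..<n}" c] assms(2) unfolding allocations_def by auto
  moreover have "0 < util v i (c ` {..<n})" if "i < n" for i
    using c that member_le_util[of "c ` {..<n}" "c i" v i] by fastforce
  ultimately show ?thesis using NW_pos_iff[OF assms(1)] by blast
qed

lemma MNW_NW_max:
  assumes "is_MNW n m k v x" "\<exists>y\<in>allocations m k. 0 < NW n v y"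
  shows "\<forall>y\<in>allocations m k. NW n v y \<le> NW n v x"
  using assms(1) unfolding is_MNW_def if_P[OF assms(2)] by blast

lemma MNW_pos_agents_max:
  assumes "is_MNW n m k v x" "\<not> (\<exists>y\<in>allocations m k. 0 < NW n v y)"
  shows "\<forall>y\<in>allocations m k. card (pos_agents n v y) \<le> card (pos_agents n v x)"
  using assms(1) unfolding is_MNW_def if_not_P[OF assms(2)] by blast

lemma MNW_nonempty:
  assumes "0 < n" "1 \<le> k" "\<forall>i<n. \<exists>j<m. 0 < v i j" "is_MNW n m k v x"
  shows "x \<noteq> {}"
proof
  assume "x = {}"
  then have no_util: "util v h x = 0" for h unfolding util_def by simp
  obtain j where j: "j < m" "0 < v 0 j" using assms(1,3) by blast
  have j_alloc: "{j} \<in> allocations m k" using j assms(2) unfolding allocations_def by auto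
  have j_pos: "0 \<in> pos_agents n v {j}" using j assms(1) unfolding pos_agents_def util_def by simp
  show False
  proof (cases "\<exists>y\<in>allocations m k. 0 < NW n v y")
    case True
    then have "0 < NW n v x" using MNW_NW_max[OF assms(4)] by force
    then show False using no_util NW_pos_iff[OF assms(1)] assms(1) by auto
  next
    case False
    then have "card (pos_agents n v {j}) \<le> card (pos_agents n v x)"
      using MNW_pos_agents_max[OF assms(4)] j_alloc by blast
    moreover have "pos_agents n v x = {}" using no_util unfolding pos_agents_def by simp
    moreover have "finite (pos_agents n v {j})" unfolding pos_agents_def by simp
    ultimately show False using j_pos by auto
  qed
qed

lemma MNW_maximizes_nash_product:
  assumes "0 < n" "n \<le> k" "\<forall>i<n. \<exists>j<m. 0 < v i j" "is_MNW n m k v x"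
  shows "\<forall>h<n. 0 < util v h x"
    and "\<forall>y\<in>allocations m k. nash_product n v y \<le> nash_product n v x"
proof -
  obtain y where "y \<in> allocations m k" "0 < NW n v y"
    using exists_allocation_NW_pos[OF assms(1-3)] by blast
  moreover have NW_max: "\<forall>y\<in>allocations m k. NW n v y \<le> NW n v x"
    using MNW_NW_max[OF assms(4)] calculation by blast
  ultimately have "0 < NW n v x" by fastforce
  then show "\<forall>h<n. 0 < util v h x" using NW_pos_iff[OF assms(1)] by blast
  show "\<forall>y\<in>allocations m k. nash_product n v y \<le> nash_product n v x"
    using NW_max NW_le_NW_iff[OF assms(1)] by blast
qed

lemma exists_less_pair_if_sum_less:
  fixes f w :: "'a \<Rightarrow> real"
  assumes "finite T" "card S \<le> card T" "\<And>t. t \<in> T \<Longrightarrow> 0 \<le> f t" "sum f T < sum w S"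
  shows "\<exists>t\<in>T. \<exists>s\<in>S. f t < w s"
proof (rule ccontr)
  assume "\<not> ?thesis"
  then have le: "w s \<le> f t" if "t \<in> T" "s \<in> S" for s t using that by (auto simp: not_less)
  have "0 \<le> sum f T" using assms(3) by (rule sum_nonneg)
  then obtain s where "s \<in> S" "finite S" using assms(4) sum.infinite by fastforce
  then have "T \<noteq> {}" using assms(1,2) by (metis card_0_eq empty_iff le_zero_eq)
  define c where "c = Min (f ` T)"
  have "c \<in> f ` T" "\<forall>t\<in>T. c \<le> f t" unfolding c_def using assms(1) \<open>T \<noteq> {}\<close> by auto
  then have "0 \<le> c" "\<forall>s'\<in>S. w s' \<le> c" using assms(3) le by auto
  have "sum w S \<le> card S * c" using \<open>\<forall>s'\<in>S. w s' \<le> c\<close> by (intro sum_bounded_above) auto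
  also have "\<dots> \<le> card T * c" using assms(2) \<open>0 \<le> c\<close> by (intro mult_right_mono) auto
  also have "\<dots> \<le> sum f T" using \<open>\<forall>t\<in>T. c \<le> f t\<close> by (intro sum_bounded_below) auto
  finally show False using assms(4) by simp
qed

lemma nash_product_swap_increase:
  assumes x: "finite x" "g \<in> x" "g' \<notin> x" and i: "i < n" and pos: "\<forall>h<n. 0 < util v h x"
    and below: "real (util v i (x - {g} \<union> {g'})) \<le> P"
    and gain: "real (v i g) + P * (\<Sum>h\<in>{..<n} - {i}. real (v h g) / real (util v h x)) < real (v i g')"
  shows "nash_product n v x < nash_product n v (x - {g} \<union> {g'})"
proof -
  define x' where "x' = x - {g} \<union> {g'}"
  define others where "others = {..<n} - {i}"
  define B where "B = (\<Sum>h\<in>others. real (v h g) / real (util v h x))"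
  define Q where "Q = (\<Prod>h\<in>others. real (util v h x))"
  have pos_others: "0 < real (util v h x)" if "h \<in> others" for h
    using pos that unfolding others_def by simp
  have loss_le: "real (v h g) \<le> real (util v h x)" for h
    using member_le_util[OF x(1,2)] by simp
  have util_x: "util v h x = util v h (x - {g}) + v h g" for h using x(1,2) by (rule util_remove)
  have util_x': "util v h x' = util v h (x - {g}) + v h g'" for h
    unfolding x'_def using x(1,3) by (rule util_swap)
  have "0 < Q" unfolding Q_def using pos_others by (intro prod_pos) auto
  have "0 \<le> B" unfolding B_def by (intro sum_nonneg) auto
  have "Q * (1 - B) \<le> Q * (\<Prod>h\<in>others. 1 - real (v h g) / real (util v h x))"
    unfolding B_def using \<open>0 < Q\<close> pos_others loss_le
    by (intro mult_left_mono Weierstrass_prod_ineq) auto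
  also have "\<dots> = (\<Prod>h\<in>others. real (util v h x) - real (v h g))"
    unfolding Q_def prod.distrib[symmetric] using pos_others by (intro prod.cong) (auto simp: field_simps)
  also have "\<dots> \<le> (\<Prod>h\<in>others. real (util v h x'))"
    using loss_le util_x util_x' by (intro prod_mono) auto
  finally have others_bound: "Q * (1 - B) \<le> (\<Prod>h\<in>others. real (util v h x'))" .
  have "real (util v i x) < real (util v i x') - P * B"
    using gain util_x[of i] util_x'[of i] unfolding B_def others_def by simp
  also have "\<dots> \<le> real (util v i x') * (1 - B)"
    using below \<open>0 \<le> B\<close> unfolding x'_def by (simp add: algebra_simps mult_left_mono)
  finally have "nash_product n v x < real (util v i x') * (1 - B) * Q"
    using nash_product_remove[OF i, of v x] \<open>0 < Q\<close> unfolding Q_def others_def by simp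
  also have "\<dots> \<le> nash_product n v x'"
    using nash_product_remove[OF i, of v x'] others_bound
    unfolding others_def by (simp add: mult.assoc mult.commute[of "1 - B"] mult_left_mono)
  finally show ?thesis unfolding x'_def .
qed

lemma sum_relative_losses_le_card:
  assumes "finite x" "T \<subseteq> x" "\<forall>h\<in>A. 0 < util v h x"
  shows "(\<Sum>t\<in>T. \<Sum>h\<in>A. real (v h t) / real (util v h x)) \<le> card A"
proof -
  have "(\<Sum>t\<in>T. \<Sum>h\<in>A. real (v h t) / real (util v h x))
      = (\<Sum>h\<in>A. real (util v h T) / real (util v h x))"
    unfolding util_def by (simp add: sum.swap[of _ T] sum_divide_distrib)
  also have "\<dots> \<le> (\<Sum>h\<in>A. 1)"
    using assms util_mono[OF assms(1,2)] by (intro sum_mono) simp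
  finally show ?thesis by simp
qed

lemma max_nash_product_swap_bound:
  assumes x: "x \<in> allocations m k" "card x = k" and pos: "\<forall>h<n. 0 < util v h x"
    and max: "\<forall>z\<in>allocations m k. nash_product n v z \<le> nash_product n v x"
    and i: "i < n" and y: "y \<in> allocations m k"
  shows "\<exists>g\<in>x. \<exists>g'<m. util v i y \<le> n * util v i (x - {g} \<union> {g'})"
proof (rule ccontr)
  assume no_swap: "\<not> ?thesis"
  define P where "P = real (util v i y) / real n"
  define others where "others = {..<n} - {i}"
  define f where "f t = real (v i t) + P * (\<Sum>h\<in>others. real (v h t) / real (util v h x))" for t
  have "0 < n" using i by simp
  have fin: "finite x" "finite y" using x(1) y by (auto intro: allocation_finite)
  have goods: "x \<subseteq> {..<m}" "y \<subseteq> {..<m}" "card y \<le> k" using x(1) y unfolding allocations_def by auto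
  have below: "real (util v i (x - {g} \<union> {g'})) < P" if "g \<in> x" "g' < m" for g g'
  proof -
    have "n * util v i (x - {g} \<union> {g'}) < util v i y"
      using no_swap that by (meson not_le)
    then have "real n * real (util v i (x - {g} \<union> {g'})) < real (util v i y)"
      by (simp flip: of_nat_mult)
    then show ?thesis unfolding P_def using \<open>0 < n\<close> by (simp add: less_divide_eq mult.commute)
  qed
  obtain g0 where "g0 \<in> x" using pos i unfolding util_def by fastforce
  then have "x - {g0} \<union> {g0} = x" "g0 < m" using goods by auto
  then have "real (util v i x) < P" using below[OF \<open>g0 \<in> x\<close>] by metis
  have "sum f (x - y) \<le> real (util v i (x - y)) + P * real (n - 1)"
  proof -
    have "(\<Sum>t\<in>x - y. \<Sum>h\<in>others. real (v h t) / real (util v h x)) \<le> real (n - 1)"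
      using sum_relative_losses_le_card[OF fin(1), of "x - y" others] pos i
      unfolding others_def by auto
    then show ?thesis
      unfolding f_def util_def using \<open>real (util v i x) < P\<close>
      by (simp add: sum.distrib sum_distrib_left[symmetric] mult_left_mono)
  qed
  also have "\<dots> < real (util v i (x - y)) + real (util v i y) - real (util v i x)"
    using \<open>real (util v i x) < P\<close> \<open>0 < n\<close> unfolding P_def by (simp add: field_simps)
  also have "\<dots> = real (util v i (y - x))"
    using util_Diff_balance[OF fin, of v i] by (simp flip: of_nat_add)
  finally have "sum f (x - y) < (\<Sum>s\<in>y - x. real (v i s))" unfolding util_def by simp
  moreover have "card (y - x) \<le> card (x - y)"
    using card_Int_Diff[OF fin(1), of y] card_Int_Diff[OF fin(2), of x] x(2) goods(3)
    by (simp add: Int_commute)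
  moreover have "0 \<le> f t" for t
    unfolding f_def using \<open>real (util v i x) < P\<close> by (intro add_nonneg_nonneg mult_nonneg_nonneg sum_nonneg) auto
  ultimately obtain g g' where g: "g \<in> x - y" and g': "g' \<in> y - x" and "f g < real (v i g')"
    using exists_less_pair_if_sum_less[of "x - y" "y - x" f] fin by blast
  then have "nash_product n v x < nash_product n v (x - {g} \<union> {g'})"
    using below[of g g'] goods fin pos i unfolding f_def others_def
    by (intro nash_product_swap_increase) auto
  moreover have "x - {g} \<union> {g'} \<in> allocations m k"
    using g g' goods by (intro swap_in_allocations[OF x(1)]) auto
  ultimately show False using max by fastforce
qed

lemma max_nash_product_unfilled_dominates:
  assumes x: "x \<in> allocations m k" "card x < k" and pos: "\<forall>h<n. 0 < util v h x"
    and max: "\<forall>z\<in>allocations m k. nash_product n v z \<le> nash_product n v x"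
    and i: "i < n" and y: "y \<in> allocations m k"
  shows "util v i y \<le> util v i x"
proof -
  have fin: "finite x" "finite y" using x(1) y by (auto intro: allocation_finite)
  have unvalued: "v i g = 0" if g: "g \<in> y - x" for g
  proof (rule ccontr)
    assume "v i g \<noteq> 0"
    define others where "others = {..<n} - {i}"
    have util_insert: "util v h (insert g x) = util v h x + v h g" for h
      unfolding util_def using fin(1) g by simp
    have "0 < (\<Prod>h\<in>others. real (util v h x))"
      using pos unfolding others_def by (intro prod_pos) auto
    moreover have "(\<Prod>h\<in>others. real (util v h x)) \<le> (\<Prod>h\<in>others. real (util v h (insert g x)))"
      using util_insert by (intro prod_mono) auto
    moreover have "real (util v i x) < real (util v i (insert g x))"
      using util_insert[of i] \<open>v i g \<noteq> 0\<close> by simp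
    ultimately have "nash_product n v x < nash_product n v (insert g x)"
      using nash_product_remove[OF i] unfolding others_def by (simp add: mult_less_le_imp_less)
    moreover have "insert g x \<in> allocations m k"
      using g y x by (intro insert_in_allocations) (auto simp: allocations_def)
    ultimately show False using max by fastforce
  qed
  have "util v i (y - x) = 0" unfolding util_def using unvalued by simp
  then show ?thesis using util_Diff_balance[OF fin, of v i] by simp
qed

lemma best_good_swap_bound:
  assumes "k \<le> n" "0 < m" "finite x" "y \<in> allocations m k"
  shows "\<exists>g'<m. util v i y \<le> n * util v i (x - {g} \<union> {g'})"
proof -
  have "Max (v i ` {..<m}) \<in> v i ` {..<m}" using assms(2) by (intro Max_in) auto
  then obtain j where "j < m" "v i j = Max (v i ` {..<m})" by (auto simp: image_iff)
  then have j: "j < m" "\<forall>j'<m. v i j' \<le> v i j" by auto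
  have y: "y \<subseteq> {..<m}" "card y \<le> n" using assms(1,4) unfolding allocations_def by auto
  have "util v i y \<le> card y * v i j"
    using y(1) j(2) by (intro util_le_card_mult) auto
  also have "\<dots> \<le> n * v i j" using y(2) by (rule mult_right_mono) simp
  also have "\<dots> \<le> n * util v i (x - {g} \<union> {j})"
    using assms(3) by (intro mult_left_mono member_le_util) auto
  finally show ?thesis using j(1) by blast
qed

lemma Prop1I:
  assumes "0 < n"
    and "\<And>i y. i < n \<Longrightarrow> y \<in> allocations m k \<Longrightarrow>
      \<exists>g\<in>x. \<exists>g'<m. util v i y \<le> n * util v i (x - {g} \<union> {g'})"
  shows "Prop1 n m k v x"
  unfolding Prop1_def
proof (intro allI impI)
  fix i assume "i < n"
  have "{} \<in> allocations m k" unfolding allocations_def by simp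
  then obtain y where y: "y \<in> allocations m k" "util v i y = Max (util v i ` allocations m k)"
    using Max_in[OF finite_imageI[OF finite_allocations], of "util v i" m k] by fastforce
  obtain g g' where "g \<in> x" "g' < m" and bound: "util v i y \<le> n * util v i (x - {g} \<union> {g'})"
    using assms(2)[OF \<open>i < n\<close> y(1)] by blast
  have "Prop_share n m k v i = real (util v i y) / real n"
    unfolding Prop_share_def y(2) by simp
  also have "\<dots> \<le> real (util v i (x - {g} \<union> {g'}))"
    using bound assms(1) by (simp add: divide_le_eq mult.commute flip: of_nat_mult)
  finally show "\<exists>g\<in>x. \<exists>g'<m. Prop_share n m k v i \<le> real (util v i (x - {g} \<union> {g'}))"
    using \<open>g \<in> x\<close> \<open>g' < m\<close> by blast
qed

theorem lemma4:
  fixes n m k :: nat and v :: "nat \<Rightarrow> nat \<Rightarrow> nat" and x :: "nat set"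
  assumes "0 < n"
    and "1 \<le> k" and "k \<le> m"
    and "\<forall>i<n. \<exists>j<m. v i j > 0"
    and "is_MNW n m k v x"
  shows "Prop1 n m k v x"
proof (rule Prop1I[OF assms(1)])
  fix i y assume i: "i < n" and y: "y \<in> allocations m k"
  have x: "x \<in> allocations m k" using assms(5) unfolding is_MNW_def by blast
  obtain g where g: "g \<in> x" using MNW_nonempty[OF assms(1,2,4,5)] by blast
  show "\<exists>g\<in>x. \<exists>g'<m. util v i y \<le> n * util v i (x - {g} \<union> {g'})"
  proof (cases "k \<le> n")
    case True
    then show ?thesis using best_good_swap_bound[OF True _ allocation_finite[OF x] y] g assms(2,3)
      by fastforce
  next
    case False
    then have "n \<le> k" by simp
    note pos = MNW_maximizes_nash_product(1)[OF assms(1) this assms(4,5)]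
      and max = MNW_maximizes_nash_product(2)[OF assms(1) this assms(4,5)]
    have "card x < k \<or> card x = k" using x unfolding allocations_def by auto
    then show ?thesis
    proof
      assume "card x < k"
      then have "util v i y \<le> util v i x"
        by (rule max_nash_product_unfilled_dominates[OF x _ pos max i y])
      also have "\<dots> \<le> n * util v i (x - {g} \<union> {g})"
        using g assms(1) by (simp add: insert_absorb)
      finally show ?thesis using g x unfolding allocations_def by blast
    next
      assume "card x = k"
      then show ?thesis by (rule max_nash_product_swap_bound[OF x _ pos max i y])
    qed
  qed
qed

end
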